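(* Consider on $\mathcal D=[0,+\infty)^3$ the system $$\dot E=\beta_E F\Big(1-\frac{E}{K}\Big)-(\nu_E+\delta_E)E,\qquad \dot M=(1-\nu)\nu_E E-\delta_M M,\qquad \dot F=\nu\nu_E E-\delta_F F .$$ If $\mathcal R_0\le 1$, then the equilibrium $\mathbf 0=(0,0,0)^T$ is globally asymptotically stable in $\mathcal D$ for this system.
   Context: Parameters: $\beta_E,\nu_E,\delta_E,\delta_M,\delta_F,K>0$ and $\nu\in(0,1)$. The basic offspring number is $\mathcal R_0:=\dfrac{\beta_E\nu\nu_E}{\delta_F(\nu_E+\delta_E)}$. The set $\mathcal D$ is positively invariant and solutions starting in $\mathcal D$ are defined for all $t\ge0$. An equilibrium $x_e\in\mathcal D$ is stable in $\mathcal D$ if for every $\varepsilon>0$ there is $\delta>0$ such that every solution with $x(0)\in\mathcal D$, $\|x(0)-x_e\|<\delta$ satisfies $\|x(t)-x_e\|<\varepsilon$ for all $t>0$; it is a global attractor in $\mathcal D$ if every solution with $x(0)\in\mathcal D$ satisfies $x(t)\to x_e$ as $t\to\infty$; it is globally asymptotically stable in $\mathcal D$ if it is both stable and a global attractor in $\mathcal D$. *)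

theory Defs
  imports "HOL-Analysis.Analysis"
begin

definition mosq_field ::
  "real \<Rightarrow> real \<Rightarrow> real \<Rightarrow> real \<Rightarrow> real \<Rightarrow> real \<Rightarrow> real
   \<Rightarrow> real \<times> real \<times> real \<Rightarrow> real \<times> real \<times> real" where
  "mosq_field \<beta>E \<nu>E \<delta>E \<delta>M \<delta>F K \<nu> s =
     (case s of (E, M, F) \<Rightarrow>
       (\<beta>E * F * (1 - E / K) - (\<nu>E + \<delta>E) * E,
        (1 - \<nu>) * \<nu>E * E - \<delta>M * M,
        \<nu> * \<nu>E * E - \<delta>F * F))"

definition R0 :: "real \<Rightarrow> real \<Rightarrow> real \<Rightarrow> real \<Rightarrow> real \<Rightarrow> real" where
  "R0 \<beta>E \<nu>E \<delta>E \<delta>F \<nu> = (\<beta>E * \<nu> * \<nu>E) / (\<delta>F * (\<nu>E + \<delta>E))"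

definition nonneg_orthant :: "(real \<times> real \<times> real) set" where
  "nonneg_orthant = {(E, M, F). E \<ge> 0 \<and> M \<ge> 0 \<and> F \<ge> 0}"

definition is_solution ::
  "(real \<times> real \<times> real \<Rightarrow> real \<times> real \<times> real) \<Rightarrow> (real \<Rightarrow> real \<times> real \<times> real) \<Rightarrow> bool" where
  "is_solution f x \<longleftrightarrow> (\<forall>t\<ge>0. (x has_vector_derivative f (x t)) (at t within {0..}))"

definition stable_in ::
  "(real \<times> real \<times> real \<Rightarrow> real \<times> real \<times> real) \<Rightarrow> (real \<times> real \<times> real) set
   \<Rightarrow> real \<times> real \<times> real \<Rightarrow> bool" where
  "stable_in f D xe \<longleftrightarrow>
     (\<forall>\<epsilon>>0. \<exists>\<delta>>0. \<forall>x. is_solution f x \<and> x 0 \<in> D \<and> norm (x 0 - xe) < \<delta>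
        \<longrightarrow> (\<forall>t>0. norm (x t - xe) < \<epsilon>))"

definition global_attractor_in ::
  "(real \<times> real \<times> real \<Rightarrow> real \<times> real \<times> real) \<Rightarrow> (real \<times> real \<times> real) set
   \<Rightarrow> real \<times> real \<times> real \<Rightarrow> bool" where
  "global_attractor_in f D xe \<longleftrightarrow>
     (\<forall>x. is_solution f x \<and> x 0 \<in> D \<longrightarrow> (x \<longlongrightarrow> xe) at_top)"

definition GAS_in ::
  "(real \<times> real \<times> real \<Rightarrow> real \<times> real \<times> real) \<Rightarrow> (real \<times> real \<times> real) set
   \<Rightarrow> real \<times> real \<times> real \<Rightarrow> bool" where
  "GAS_in f D xe \<longleftrightarrow> stable_in f D xe \<and> global_attractor_in f D xe"

end

theory Submission
  imports Defs "HOL-Real_Asymp.Real_Asymp"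
begin

(*
  The orthant is forward invariant: on its boundary faces E = 0 and F = 0 the field points
  inward, and a small exponentially growing perturbation turns this into a strict first-exit
  contradiction.  On the orthant, V = \<nu>\<nu>E E + (\<nu>E + \<delta>E) F is a Lyapunov function whose
  derivative F ((\<nu>E+\<delta>E) \<delta>F (R0 - 1) - \<beta>E \<nu>\<nu>E E / K) is nonpositive exactly when R0 \<le> 1.
  It bounds E and F, hence also M, linearly by the initial state (stability).  Since V' may
  vanish away from the origin, V - \<epsilon> E F is used instead: while V stays above \<eta> it decreases
  at a uniform rate yet stays bounded below, so V tends to 0; then E, F \<rightarrow> 0, and M \<rightarrow> 0 by
  linear decay of M' = (1 - \<nu>) \<nu>E E - \<delta>M M.
*)

lemma has_vector_derivative_fst:
  "(x has_vector_derivative v) F \<Longrightarrow> ((\<lambda>t. fst (x t)) has_vector_derivative fst v) F"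
  unfolding has_vector_derivative_def by (drule has_derivative_fst) simp

lemma has_vector_derivative_snd:
  "(x has_vector_derivative v) F \<Longrightarrow> ((\<lambda>t. snd (x t)) has_vector_derivative snd v) F"
  unfolding has_vector_derivative_def by (drule has_derivative_snd) simp

definition has_deriv_on_halfline :: "(real \<Rightarrow> real) \<Rightarrow> (real \<Rightarrow> real) \<Rightarrow> bool" where
  "has_deriv_on_halfline f f' \<longleftrightarrow> (\<forall>t\<ge>0. (f has_real_derivative f' t) (at t within {0..}))"

lemma has_deriv_on_halfline_continuous_on:
  "has_deriv_on_halfline f f' \<Longrightarrow> continuous_on {0..} f"
  unfolding has_deriv_on_halfline_def continuous_on_eq_continuous_within
  by (metis DERIV_continuous atLeast_iff)

lemma has_deriv_on_halfline_at:
  "has_deriv_on_halfline f f' \<Longrightarrow> 0 < t \<Longrightarrow> (f has_real_derivative f' t) (at t)"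
  unfolding has_deriv_on_halfline_def
  using at_within_interior[of t "{0::real..}"]
  by (metis interior_real_atLeast greaterThan_iff less_imp_le)

lemma has_deriv_on_halfline_antimono:
  assumes "has_deriv_on_halfline f f'" "0 \<le> s" "s \<le> t" "\<And>r. s < r \<Longrightarrow> r < t \<Longrightarrow> f' r \<le> 0"
  shows "f t \<le> f s"
proof (rule DERIV_nonpos_imp_decreasing_open[OF \<open>s \<le> t\<close>])
  show "continuous_on {s..t} f"
    using has_deriv_on_halfline_continuous_on[OF assms(1)] by (rule continuous_on_subset) (use assms in auto)
  fix r assume "s < r" "r < t"
  then show "\<exists>z. (f has_real_derivative z) (at r) \<and> z \<le> 0"
    using has_deriv_on_halfline_at[OF assms(1), of r] assms(2,4) by force
qed

lemma linear_gronwall: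
  assumes "has_deriv_on_halfline u u'" "0 \<le> s" "s \<le> t"
    and "\<And>r. s < r \<Longrightarrow> r < t \<Longrightarrow> u' r \<le> k * (b - u r)"
  shows "u t - b \<le> (u s - b) * exp (- k * (t - s))"
proof -
  have "(u t - b) * exp (k * t) \<le> (u s - b) * exp (k * s)"
  proof (rule has_deriv_on_halfline_antimono[OF _ assms(2,3)])
    show "has_deriv_on_halfline (\<lambda>r. (u r - b) * exp (k * r)) (\<lambda>r. (u' r + k * (u r - b)) * exp (k * r))"
      using assms(1) unfolding has_deriv_on_halfline_def
      by (auto intro!: derivative_eq_intros simp: algebra_simps)
    fix r assume "s < r" "r < t"
    then have "u' r + k * (u r - b) \<le> 0"
      using assms(4) by (simp add: algebra_simps)
    then show "(u' r + k * (u r - b)) * exp (k * r) \<le> 0"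
      by (simp add: mult_nonpos_nonneg)
  qed
  then have "u t - b \<le> (u s - b) * exp (k * s) / exp (k * t)"
    by (simp add: pos_le_divide_eq)
  also have "\<dots> = (u s - b) * exp (- k * (t - s))"
    by (simp add: exp_diff algebra_simps flip: exp_minus)
  finally show ?thesis .
qed

lemma linear_decay_tendsto_zero:
  assumes "has_deriv_on_halfline u u'" "0 < k" "(g \<longlongrightarrow> 0) at_top"
    and "\<And>t. 0 \<le> t \<Longrightarrow> u' t \<le> g t - k * u t"
    and "\<And>t. 0 \<le> t \<Longrightarrow> 0 \<le> u t"
  shows "(u \<longlongrightarrow> 0) at_top"
proof (rule order_tendstoI)
  fix y :: real assume "y < 0"
  then show "eventually (\<lambda>t. y < u t) at_top"
    using assms(5) by (auto simp: eventually_at_top_linorder intro: less_le_trans)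
next
  fix y :: real assume "0 < y"
  define \<eta> where "\<eta> = y / 2"
  have "0 < k * \<eta>" using \<open>0 < y\<close> \<open>0 < k\<close> by (simp add: \<eta>_def)
  then obtain s0 where s0: "\<And>t. s0 \<le> t \<Longrightarrow> g t < k * \<eta>"
    using order_tendstoD(2)[OF assms(3)] unfolding eventually_at_top_linorder by blast
  define s where "s = max s0 0"
  have bound: "u t - \<eta> \<le> (u s - \<eta>) * exp (- k * (t - s))" if "s \<le> t" for t
  proof (rule linear_gronwall[OF assms(1) _ that])
    show "0 \<le> s" by (simp add: s_def)
    fix r assume "s < r"
    then show "u' r \<le> k * (\<eta> - u r)"
      using assms(4)[of r] s0[of r] by (simp add: s_def right_diff_distrib)
  qed
  have "((\<lambda>t. (u s - \<eta>) * exp (- k * (t - s))) \<longlongrightarrow> 0) at_top"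
    using \<open>0 < k\<close> by real_asymp
  then have "eventually (\<lambda>t. (u s - \<eta>) * exp (- k * (t - s)) < \<eta>) at_top"
    using \<open>0 < y\<close> by (intro order_tendstoD(2)) (auto simp: \<eta>_def)
  moreover have "eventually (\<lambda>t. s \<le> t) at_top" by (rule eventually_ge_at_top)
  ultimately show "eventually (\<lambda>t. u t < y) at_top"
    by eventually_elim (use bound in \<open>fastforce simp: \<eta>_def\<close>)
qed

lemma has_deriv_on_halfline_unbounded_below:
  assumes "has_deriv_on_halfline w w'" "0 < \<gamma>" "\<And>t. 0 \<le> t \<Longrightarrow> w' t \<le> - \<gamma>"
  shows "\<exists>t\<ge>0. w t < L"
proof -
  define t where "t = max 0 ((w 0 - L + 1) / \<gamma>)"
  have "w t + \<gamma> * t \<le> w 0 + \<gamma> * 0"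
  proof (rule has_deriv_on_halfline_antimono[of "\<lambda>t. w t + \<gamma> * t"])
    show "has_deriv_on_halfline (\<lambda>t. w t + \<gamma> * t) (\<lambda>t. w' t + \<gamma>)"
      using assms(1) unfolding has_deriv_on_halfline_def by (auto intro!: derivative_eq_intros)
  next
    fix r :: real assume "0 < r"
    then show "w' r + \<gamma> \<le> 0" using assms(3)[of r] by simp
  qed (simp_all add: t_def)
  moreover have "w 0 - L + 1 \<le> \<gamma> * t"
    using \<open>0 < \<gamma>\<close> by (simp add: t_def max_def field_simps)
  ultimately show ?thesis by (intro exI[of _ t]) (auto simp: t_def)
qed

lemma first_zero_exists:
  fixes g :: "real \<Rightarrow> real"
  assumes cont: "continuous_on {0..T} g" and "0 < g 0" "0 \<le> t" "t \<le> T" "g t \<le> 0"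
  obtains t1 where "0 < t1" "t1 \<le> T" "g t1 = 0" "\<And>s. 0 \<le> s \<Longrightarrow> s < t1 \<Longrightarrow> 0 < g s"
proof -
  define Z where "Z = {s \<in> {0..T}. g s = 0}"
  have zero_below: "\<exists>z\<in>Z. z \<le> s" if s: "0 \<le> s" "s \<le> T" "g s \<le> 0" for s
  proof -
    have "continuous_on {0..s} g" using cont by (rule continuous_on_subset) (use s in auto)
    then obtain z where "0 \<le> z" "z \<le> s" "g z = 0"
      using IVT2'[of g s 0 0] s \<open>0 < g 0\<close> by force
    then show ?thesis using s by (auto simp: Z_def)
  qed
  have "Inf Z \<in> Z"
  proof (rule closed_contains_Inf)
    show "Z \<noteq> {}" using zero_below[OF assms(3-5)] by auto
    show "bdd_below Z" by (auto simp: Z_def intro: bdd_belowI[where m=0])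
    show "closed Z" unfolding Z_def by (rule continuous_closed_preimage_constant[OF cont]) simp
  qed
  moreover have "Inf Z \<le> z" if "z \<in> Z" for z
    using that by (intro cInf_lower) (auto simp: Z_def intro: bdd_belowI[where m=0])
  ultimately show thesis
    using zero_below \<open>0 < g 0\<close> by (intro that[of "Inf Z"]) (force simp: Z_def)+
qed

lemma deriv_nonpos_at_first_zero:
  fixes g :: "real \<Rightarrow> real"
  assumes "(g has_real_derivative D) (at t)" "0 < t" "g t = 0"
    and "\<And>s. 0 \<le> s \<Longrightarrow> s < t \<Longrightarrow> 0 < g s"
  shows "D \<le> 0"
proof (rule ccontr)
  assume "\<not> D \<le> 0"
  then obtain d where "0 < d" and dec: "\<And>h. 0 < h \<Longrightarrow> h < d \<Longrightarrow> g (t - h) < g t"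
    using DERIV_pos_inc_left[OF assms(1)] by force
  define h where "h = min d t / 2"
  have "0 < h" "h < d" "h < t" using \<open>0 < d\<close> \<open>0 < t\<close> by (auto simp: h_def)
  then show False using dec[of h] assms(3) assms(4)[of "t - h"] by simp
qed

context
  fixes E F E' F' :: "real \<Rightarrow> real" and k :: real
  assumes dE: "has_deriv_on_halfline E E'" and dF: "has_deriv_on_halfline F F'"
    and init: "0 \<le> E 0" "0 \<le> F 0" and "0 \<le> k"
    and E_inward: "\<And>t w. 0 < t \<Longrightarrow> 0 < w \<Longrightarrow> w \<le> 1 \<Longrightarrow> E t = - w \<Longrightarrow> - w \<le> F t \<Longrightarrow> 0 < E' t + k * w"
    and F_inward: "\<And>t w. 0 < t \<Longrightarrow> 0 < w \<Longrightarrow> w \<le> 1 \<Longrightarrow> F t = - w \<Longrightarrow> - w \<le> E t \<Longrightarrow> 0 < F' t + k * w"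
begin

text \<open>Adding \<open>w t = \<epsilon> exp (k (t - T))\<close> makes the inward conditions strict: at a first zero of
  \<open>E + w\<close> or \<open>F + w\<close> that function would be strictly increasing, which is impossible.\<close>

lemma nonneg_pair_barrier:
  assumes "0 \<le> T" "0 < \<epsilon>" "\<epsilon> \<le> 1"
  shows "0 < E T + \<epsilon> \<and> 0 < F T + \<epsilon>"
proof (rule ccontr)
  assume crossed: "\<not> ?thesis"
  define w where "w t = \<epsilon> * exp (k * (t - T))" for t
  define g1 where "g1 t = E t + w t" for t
  define g2 where "g2 t = F t + w t" for t
  have w_pos: "0 < w t" for t using \<open>0 < \<epsilon>\<close> by (simp add: w_def)
  have w_le: "w t \<le> 1" if "t \<le> T" for t
  proof -
    have "exp (k * (t - T)) \<le> 1" using \<open>0 \<le> k\<close> that by (simp add: mult_nonneg_nonpos)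
    then show ?thesis using assms(2,3) unfolding w_def by (metis mult_le_one exp_ge_zero less_imp_le)
  qed
  have dg1: "has_deriv_on_halfline g1 (\<lambda>t. E' t + k * w t)"
    using dE unfolding has_deriv_on_halfline_def g1_def w_def by (auto intro!: derivative_eq_intros)
  have dg2: "has_deriv_on_halfline g2 (\<lambda>t. F' t + k * w t)"
    using dF unfolding has_deriv_on_halfline_def g2_def w_def by (auto intro!: derivative_eq_intros)
  have cont: "continuous_on {0..T} (\<lambda>t. min (g1 t) (g2 t))"
    by (intro continuous_intros continuous_on_subset[OF has_deriv_on_halfline_continuous_on[OF dg1]]
        continuous_on_subset[OF has_deriv_on_halfline_continuous_on[OF dg2]]) auto
  have "0 < min (g1 0) (g2 0)" using init w_pos[of 0] by (simp add: g1_def g2_def)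
  moreover have "min (g1 T) (g2 T) \<le> 0" using crossed by (auto simp: g1_def g2_def w_def)
  ultimately obtain t1 where t1: "0 < t1" "t1 \<le> T" "min (g1 t1) (g2 t1) = 0"
    and before: "\<And>s. 0 \<le> s \<Longrightarrow> s < t1 \<Longrightarrow> 0 < min (g1 s) (g2 s)"
    using first_zero_exists[OF cont _ \<open>0 \<le> T\<close> order_refl] by metis
  have W: "0 < w t1" "w t1 \<le> 1" using w_pos w_le t1(2) by auto
  consider "g1 t1 = 0" "0 \<le> g2 t1" | "g2 t1 = 0" "0 \<le> g1 t1"
    using t1(3) by linarith
  then show False
  proof cases
    case 1
    then have "0 < E' t1 + k * w t1"
      by (intro E_inward[OF t1(1) W]) (auto simp: g1_def g2_def)
    moreover have "E' t1 + k * w t1 \<le> 0"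
      by (rule deriv_nonpos_at_first_zero[OF has_deriv_on_halfline_at[OF dg1 t1(1)] t1(1) 1(1)])
        (use before in auto)
    ultimately show False by simp
  next
    case 2
    then have "0 < F' t1 + k * w t1"
      by (intro F_inward[OF t1(1) W]) (auto simp: g1_def g2_def)
    moreover have "F' t1 + k * w t1 \<le> 0"
      by (rule deriv_nonpos_at_first_zero[OF has_deriv_on_halfline_at[OF dg2 t1(1)] t1(1) 2(1)])
        (use before in auto)
    ultimately show False by simp
  qed
qed

lemma nonneg_pair_invariant:
  assumes "0 \<le> t"
  shows "0 \<le> E t \<and> 0 \<le> F t"
proof -
  have "0 \<le> E t + \<epsilon> \<and> 0 \<le> F t + \<epsilon>" if "0 < \<epsilon>" for \<epsilon>
    using nonneg_pair_barrier[OF assms, of "min \<epsilon> 1"] that by auto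
  then show ?thesis by (auto intro: field_le_epsilon)
qed

end

lemma stable_in_zero_of_linear_bound:
  assumes "0 < C"
    and bound: "\<And>x t. is_solution f x \<Longrightarrow> x 0 \<in> D \<Longrightarrow> 0 \<le> t \<Longrightarrow> norm (x t) \<le> C * norm (x 0)"
  shows "stable_in f D 0"
  unfolding stable_in_def
proof (intro allI impI)
  fix \<epsilon> :: real assume "0 < \<epsilon>"
  show "\<exists>\<delta>>0. \<forall>x. is_solution f x \<and> x 0 \<in> D \<and> norm (x 0 - 0) < \<delta> \<longrightarrow> (\<forall>t>0. norm (x t - 0) < \<epsilon>)"
  proof (intro exI[of _ "\<epsilon> / C"] conjI allI impI)
    show "0 < \<epsilon> / C" using \<open>0 < \<epsilon>\<close> \<open>0 < C\<close> by simp
    fix x and t :: real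
    assume x: "is_solution f x \<and> x 0 \<in> D \<and> norm (x 0 - 0) < \<epsilon> / C" and "0 < t"
    have "norm (x t) \<le> C * norm (x 0)" using bound x \<open>0 < t\<close> by simp
    also have "\<dots> < \<epsilon>" using x \<open>0 < C\<close> by (simp add: pos_less_divide_eq mult.commute)
    finally show "norm (x t - 0) < \<epsilon>" by simp
  qed
qed

lemma weighted_square_le:
  fixes p q r X Y :: real
  assumes "0 \<le> p" "0 < r"
  shows "(p * X + q * Y)^2 \<le> (p + q^2 / r) * (p * X^2 + r * Y^2)"
proof -
  have "(p + q^2 / r) * (p * X^2 + r * Y^2) - (p * X + q * Y)^2 = p / r * (r * Y - q * X)^2"
    using \<open>0 < r\<close> by (simp add: field_simps power2_eq_square)
  moreover have "0 \<le> p / r * (r * Y - q * X)^2" using assms by simp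
  ultimately show ?thesis by linarith
qed

locale mosquito_model =
  fixes \<beta>E \<nu>E \<delta>E \<delta>M \<delta>F K \<nu> :: real
  assumes \<beta>E_pos: "0 < \<beta>E" and \<nu>E_pos: "0 < \<nu>E" and \<delta>E_pos: "0 < \<delta>E"
    and \<delta>M_pos: "0 < \<delta>M" and \<delta>F_pos: "0 < \<delta>F" and K_pos: "0 < K"
    and \<nu>_pos: "0 < \<nu>" and \<nu>_less_1: "\<nu> < 1"
    and R0_le_1: "R0 \<beta>E \<nu>E \<delta>E \<delta>F \<nu> \<le> 1"
begin

definition "a = \<nu>E + \<delta>E"
definition "cF = \<nu> * \<nu>E"
definition "cM = (1 - \<nu>) * \<nu>E"

lemma a_pos: "0 < a" using \<nu>E_pos \<delta>E_pos by (simp add: a_def)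
lemma cF_pos: "0 < cF" using \<nu>_pos \<nu>E_pos by (simp add: cF_def)
lemma cM_pos: "0 < cM" using \<nu>_less_1 \<nu>E_pos by (simp add: cM_def)

lemma \<beta>E_cF_le: "\<beta>E * cF \<le> \<delta>F * a"
proof -
  have "0 < \<delta>F * (\<nu>E + \<delta>E)" using \<delta>F_pos \<nu>E_pos \<delta>E_pos by simp
  then show ?thesis using R0_le_1 by (simp add: R0_def a_def cF_def pos_divide_le_eq mult.assoc)
qed

definition "rateE e f = \<beta>E * f * (1 - e / K) - a * e"
definition "rateF e f = cF * e - \<delta>F * f"

lemma mosq_field_eq:
  "mosq_field \<beta>E \<nu>E \<delta>E \<delta>M \<delta>F K \<nu> (e, m, f) = (rateE e f, cM * e - \<delta>M * m, rateF e f)"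
  by (simp add: mosq_field_def rateE_def rateF_def a_def cF_def cM_def)

lemma rateE_inward:
  assumes "0 < w" "w \<le> 1" "- w \<le> f"
  shows "0 < rateE (- w) f + (\<beta>E + \<beta>E / K + cF) * w"
proof -
  have "- w * (1 + w / K) \<le> f * (1 + w / K)"
    using assms K_pos by (intro mult_right_mono) (auto simp: add_nonneg_nonneg)
  moreover have "w * w / K \<le> w / K" using assms K_pos by (simp add: divide_right_mono mult_le_one)
  ultimately have "- w - w / K \<le> f * (1 + w / K)" by (simp add: algebra_simps)
  then have "- \<beta>E * w - \<beta>E * w / K \<le> \<beta>E * f * (1 + w / K)"
    using mult_left_mono[of _ _ \<beta>E] \<beta>E_pos by (fastforce simp: algebra_simps)
  moreover have "0 < (a + cF) * w" using a_pos cF_pos assms by simp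
  ultimately show ?thesis by (simp add: rateE_def algebra_simps)
qed

lemma rateF_inward:
  assumes "0 < w" "- w \<le> e"
  shows "0 < rateF e (- w) + (\<beta>E + \<beta>E / K + cF) * w"
proof -
  have "- cF * w \<le> cF * e" using mult_left_mono[OF assms(2), of cF] cF_pos by simp
  moreover have "0 < (\<beta>E + \<beta>E / K + \<delta>F) * w"
    using assms \<beta>E_pos K_pos \<delta>F_pos by (intro mult_pos_pos add_pos_pos) auto
  ultimately show ?thesis by (simp add: rateF_def algebra_simps)
qed

lemma lyapunov_rate_nonpos:
  assumes "0 \<le> e" "0 \<le> f"
  shows "cF * rateE e f + a * rateF e f \<le> 0"
proof -
  have "cF * rateE e f + a * rateF e f = f * (\<beta>E * cF - \<delta>F * a) - cF * \<beta>E / K * (e * f)"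
    by (simp add: rateE_def rateF_def algebra_simps)
  moreover have "f * (\<beta>E * cF - \<delta>F * a) \<le> 0"
    using assms \<beta>E_cF_le by (simp add: mult_nonneg_nonpos)
  moreover have "0 \<le> cF * \<beta>E / K * (e * f)" using assms cF_pos \<beta>E_pos K_pos by simp
  ultimately show ?thesis by linarith
qed

definition "stability_const = 1 + (cF + a) * (1 / cF + 1 / a + cM / (cF * \<delta>M))"

lemma stability_const_pos: "0 < stability_const"
  using cF_pos a_pos cM_pos \<delta>M_pos by (simp add: stability_const_def add_pos_nonneg)

text \<open>The weight of the cross term \<open>- \<epsilon> e f\<close> in the perturbed Lyapunov function is chosen so
  that all \<open>e f\<close> terms of its derivative cancel when \<open>f = R\<close>.\<close>

definition "cross_weight R = cF * \<beta>E / K / (\<beta>E * R / K + a + \<delta>F)"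

lemma cross_weight_pos: "0 \<le> R \<Longrightarrow> 0 < cross_weight R"
  using cF_pos \<beta>E_pos K_pos a_pos \<delta>F_pos by (simp add: cross_weight_def add_nonneg_pos add_pos_pos)

lemma perturbed_lyapunov_rate_le:
  assumes "0 \<le> e" "0 \<le> f" "f \<le> R"
  shows "cF * rateE e f + a * rateF e f - cross_weight R * (rateE e f * f + e * rateF e f)
           \<le> - cross_weight R * (cF * e^2 + \<beta>E * f^2)"
proof -
  define \<epsilon> where "\<epsilon> = cross_weight R"
  have den: "0 < \<beta>E * R / K + a + \<delta>F"
    using assms \<beta>E_pos K_pos a_pos \<delta>F_pos by (simp add: add_nonneg_pos add_pos_pos)
  then have cancel: "\<epsilon> * (\<beta>E * R / K + a + \<delta>F) = cF * \<beta>E / K"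
    by (simp add: \<epsilon>_def cross_weight_def)
  have "cF * rateE e f + a * rateF e f - \<epsilon> * (rateE e f * f + e * rateF e f)
      = f * (\<beta>E * cF - \<delta>F * a) - \<epsilon> * \<beta>E / K * (e * f * (R - f)) - \<epsilon> * (cF * e^2 + \<beta>E * f^2)
        + e * f * (\<epsilon> * (\<beta>E * R / K + a + \<delta>F) - cF * \<beta>E / K)"
    (is "?W = ?main + _")
    using K_pos by (simp add: rateE_def rateF_def field_simps power2_eq_square)
  then have "?W = ?main" by (simp add: cancel)
  moreover have "f * (\<beta>E * cF - \<delta>F * a) \<le> 0"
    using assms \<beta>E_cF_le by (simp add: mult_nonneg_nonpos)
  moreover have "0 \<le> \<epsilon> * \<beta>E / K * (e * f * (R - f))"
    using assms cross_weight_pos[of R] \<beta>E_pos K_pos by (simp add: \<epsilon>_def)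
  ultimately show ?thesis by (simp add: \<epsilon>_def)
qed

end

locale mosquito_solution = mosquito_model +
  fixes x :: "real \<Rightarrow> real \<times> real \<times> real"
  assumes solution: "is_solution (mosq_field \<beta>E \<nu>E \<delta>E \<delta>M \<delta>F K \<nu>) x"
    and initial_nonneg: "x 0 \<in> nonneg_orthant"
begin

definition "E t = fst (x t)"
definition "M t = fst (snd (x t))"
definition "F t = snd (snd (x t))"

lemma x_eq: "x t = (E t, M t, F t)"
  by (simp add: E_def M_def F_def)

lemma initial_components_nonneg: "0 \<le> E 0" "0 \<le> M 0" "0 \<le> F 0"
  using initial_nonneg by (auto simp: nonneg_orthant_def x_eq)

lemma x_has_vector_derivative:
  "0 \<le> t \<Longrightarrow> (x has_vector_derivative (rateE (E t) (F t), cM * E t - \<delta>M * M t, rateF (E t) (F t)))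
     (at t within {0..})"
  using solution unfolding is_solution_def by (metis x_eq mosq_field_eq)

lemma E_deriv: "has_deriv_on_halfline E (\<lambda>t. rateE (E t) (F t))"
  unfolding has_deriv_on_halfline_def has_real_derivative_iff_has_vector_derivative
  using has_vector_derivative_fst[OF x_has_vector_derivative] by (simp add: E_def[abs_def])

lemma M_deriv: "has_deriv_on_halfline M (\<lambda>t. cM * E t - \<delta>M * M t)"
  unfolding has_deriv_on_halfline_def has_real_derivative_iff_has_vector_derivative
  using has_vector_derivative_fst[OF has_vector_derivative_snd[OF x_has_vector_derivative]]
  by (simp add: M_def[abs_def])

lemma F_deriv: "has_deriv_on_halfline F (\<lambda>t. rateF (E t) (F t))"
  unfolding has_deriv_on_halfline_def has_real_derivative_iff_has_vector_derivative
  using has_vector_derivative_snd[OF has_vector_derivative_snd[OF x_has_vector_derivative]]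
  by (simp add: F_def[abs_def])

lemma E_F_nonneg:
  assumes "0 \<le> t"
  shows "0 \<le> E t" "0 \<le> F t"
proof -
  have "0 \<le> \<beta>E + \<beta>E / K + cF" using \<beta>E_pos K_pos cF_pos by simp
  then have "0 \<le> E t \<and> 0 \<le> F t"
    by (rule nonneg_pair_invariant[OF E_deriv F_deriv initial_components_nonneg(1,3) _ _ _ assms])
      (auto intro: rateE_inward rateF_inward simp del: minus_le_iff)
  then show "0 \<le> E t" "0 \<le> F t" by simp_all
qed

definition "V t = cF * E t + a * F t"

lemma V_deriv: "has_deriv_on_halfline V (\<lambda>t. cF * rateE (E t) (F t) + a * rateF (E t) (F t))"
  using E_deriv F_deriv unfolding has_deriv_on_halfline_def V_def[abs_def]
  by (auto intro!: derivative_eq_intros)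

lemma V_antimono: "0 \<le> s \<Longrightarrow> s \<le> t \<Longrightarrow> V t \<le> V s"
  by (rule has_deriv_on_halfline_antimono[OF V_deriv]) (auto intro!: lyapunov_rate_nonpos E_F_nonneg)

lemma E_le_V: "0 \<le> t \<Longrightarrow> cF * E t \<le> V t"
  using E_F_nonneg[of t] a_pos by (simp add: V_def)

lemma F_le_V: "0 \<le> t \<Longrightarrow> a * F t \<le> V t"
  using E_F_nonneg[of t] cF_pos by (simp add: V_def)

lemma E_le_initial_V:
  assumes "0 \<le> t"
  shows "E t \<le> V 0 / cF"
proof -
  have "cF * E t \<le> V 0" using E_le_V[OF assms] V_antimono[OF order_refl assms] by linarith
  then show ?thesis using cF_pos by (simp add: pos_le_divide_eq mult.commute)
qed

lemma F_le_initial_V: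
  assumes "0 \<le> t"
  shows "F t \<le> V 0 / a"
proof -
  have "a * F t \<le> V 0" using F_le_V[OF assms] V_antimono[OF order_refl assms] by linarith
  then show ?thesis using a_pos by (simp add: pos_le_divide_eq mult.commute)
qed

lemma V_nonneg: "0 \<le> t \<Longrightarrow> 0 \<le> V t"
  using E_F_nonneg[of t] a_pos cF_pos by (simp add: V_def)

lemma M_nonneg:
  assumes "0 \<le> t"
  shows "0 \<le> M t"
proof -
  have "- M t - 0 \<le> (- M 0 - 0) * exp (- \<delta>M * (t - 0))"
  proof (rule linear_gronwall[OF _ order_refl assms])
    show "has_deriv_on_halfline (\<lambda>t. - M t) (\<lambda>t. - (cM * E t - \<delta>M * M t))"
      using M_deriv unfolding has_deriv_on_halfline_def by (auto intro!: derivative_eq_intros)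
    fix r :: real assume "0 < r"
    then show "- (cM * E r - \<delta>M * M r) \<le> \<delta>M * (0 - - M r)"
      using E_F_nonneg(1)[of r] cM_pos by simp
  qed
  moreover have "0 \<le> M 0 * exp (- \<delta>M * (t - 0))" using initial_components_nonneg(2) by simp
  ultimately show ?thesis by simp
qed

lemma M_le:
  assumes "0 \<le> t"
  shows "M t \<le> M 0 + cM * V 0 / (cF * \<delta>M)"
proof -
  define b where "b = M 0 + cM * V 0 / (cF * \<delta>M)"
  have "M t - b \<le> (M 0 - b) * exp (- \<delta>M * (t - 0))"
  proof (rule linear_gronwall[OF M_deriv order_refl assms])
    fix r :: real assume "0 < r"
    then have "E r \<le> V 0 / cF" by (simp add: E_le_initial_V)
    then have "cM * E r \<le> cM * (V 0 / cF)" using cM_pos by (simp only: mult_left_mono less_imp_le)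
    also have "\<dots> \<le> \<delta>M * b"
      using initial_components_nonneg(2) \<delta>M_pos by (simp add: b_def field_simps)
    finally show "cM * E r - \<delta>M * M r \<le> \<delta>M * (b - M r)" by (simp add: algebra_simps)
  qed
  moreover have "(M 0 - b) * exp (- \<delta>M * (t - 0)) \<le> 0"
    using V_nonneg[of 0] cM_pos cF_pos \<delta>M_pos by (simp add: b_def mult_nonpos_nonneg)
  ultimately show ?thesis by (simp add: b_def)
qed

lemma V_eventually_below:
  assumes "0 < \<eta>"
  shows "\<exists>t\<ge>0. V t < \<eta>"
proof (rule ccontr)
  assume "\<not> ?thesis"
  then have large: "\<eta> \<le> V t" if "0 \<le> t" for t using that by force
  define R where "R = V 0 / a"
  define \<epsilon> where "\<epsilon> = cross_weight R"
  define \<gamma> where "\<gamma> = \<epsilon> * \<eta>^2 / (cF + a^2 / \<beta>E)"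
  have "0 \<le> R" using V_nonneg[of 0] a_pos by (simp add: R_def)
  then have "0 < \<epsilon>" by (simp add: \<epsilon>_def cross_weight_pos)
  have quad_weight_pos: "0 < cF + a^2 / \<beta>E" using cF_pos \<beta>E_pos by (simp add: add_pos_nonneg)
  have F_le_R: "F t \<le> R" if "0 \<le> t" for t
    using F_le_initial_V[OF that] by (simp add: R_def)
  define W' where "W' t = cF * rateE (E t) (F t) + a * rateF (E t) (F t)
      - \<epsilon> * (rateE (E t) (F t) * F t + E t * rateF (E t) (F t))" for t
  have W_deriv: "has_deriv_on_halfline (\<lambda>t. V t - \<epsilon> * (E t * F t)) W'"
    using V_deriv E_deriv F_deriv unfolding has_deriv_on_halfline_def W'_def
    by (auto intro!: derivative_eq_intros)
  have "W' t \<le> - \<gamma>" if "0 \<le> t" for t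
  proof -
    have "\<eta>^2 \<le> (V t)^2" using large[OF that] assms by (intro power_mono) auto
    also have "\<dots> \<le> (cF + a^2 / \<beta>E) * (cF * (E t)^2 + \<beta>E * (F t)^2)"
      unfolding V_def using cF_pos \<beta>E_pos by (intro weighted_square_le) auto
    finally have "\<eta>^2 / (cF + a^2 / \<beta>E) \<le> cF * (E t)^2 + \<beta>E * (F t)^2"
      using quad_weight_pos by (simp add: pos_divide_le_eq ac_simps)
    then have "\<gamma> \<le> \<epsilon> * (cF * (E t)^2 + \<beta>E * (F t)^2)"
      using mult_left_mono[of _ _ \<epsilon>] \<open>0 < \<epsilon>\<close> by (fastforce simp: \<gamma>_def)
    moreover have "W' t \<le> - \<epsilon> * (cF * (E t)^2 + \<beta>E * (F t)^2)"
      unfolding W'_def \<epsilon>_def using E_F_nonneg[OF that] F_le_R[OF that]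
      by (rule perturbed_lyapunov_rate_le)
    ultimately show ?thesis by linarith
  qed
  moreover have "0 < \<gamma>" using \<open>0 < \<epsilon>\<close> assms quad_weight_pos by (simp add: \<gamma>_def)
  ultimately obtain t where "0 \<le> t" and t: "V t - \<epsilon> * (E t * F t) < - \<epsilon> * (V 0 / cF * R)"
    using has_deriv_on_halfline_unbounded_below[OF W_deriv] by blast
  have "E t * F t \<le> V 0 / cF * R"
    using E_le_initial_V[OF \<open>0 \<le> t\<close>] F_le_R[OF \<open>0 \<le> t\<close>] E_F_nonneg[OF \<open>0 \<le> t\<close>] by (intro mult_mono) auto
  then have "\<epsilon> * (E t * F t) \<le> \<epsilon> * (V 0 / cF * R)"
    using \<open>0 < \<epsilon>\<close> by (rule mult_left_mono[OF _ less_imp_le])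
  then show False using t V_nonneg[OF \<open>0 \<le> t\<close>] by linarith
qed

lemma V_tendsto_zero: "(V \<longlongrightarrow> 0) at_top"
proof (rule order_tendstoI)
  fix y :: real assume "y < 0"
  then show "eventually (\<lambda>t. y < V t) at_top"
    unfolding eventually_at_top_linorder using V_nonneg by (meson less_le_trans)
next
  fix y :: real assume "0 < y"
  then obtain t0 where "0 \<le> t0" "V t0 < y" using V_eventually_below by blast
  then show "eventually (\<lambda>t. V t < y) at_top"
    unfolding eventually_at_top_linorder using V_antimono by (meson le_less_trans)
qed

lemma E_tendsto_zero: "(E \<longlongrightarrow> 0) at_top"
proof (rule tendsto_sandwich[where f = "\<lambda>_. 0" and h = "\<lambda>t. V t / cF"])
  show "eventually (\<lambda>t. 0 \<le> E t) at_top"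
    unfolding eventually_at_top_linorder using E_F_nonneg by blast
  show "eventually (\<lambda>t. E t \<le> V t / cF) at_top"
    unfolding eventually_at_top_linorder using E_le_V cF_pos by (auto simp: pos_le_divide_eq mult.commute)
  show "((\<lambda>t. V t / cF) \<longlongrightarrow> 0) at_top" using tendsto_divide_zero[OF V_tendsto_zero] .
qed simp

lemma F_tendsto_zero: "(F \<longlongrightarrow> 0) at_top"
proof (rule tendsto_sandwich[where f = "\<lambda>_. 0" and h = "\<lambda>t. V t / a"])
  show "eventually (\<lambda>t. 0 \<le> F t) at_top"
    unfolding eventually_at_top_linorder using E_F_nonneg by blast
  show "eventually (\<lambda>t. F t \<le> V t / a) at_top"
    unfolding eventually_at_top_linorder using F_le_V a_pos by (auto simp: pos_le_divide_eq mult.commute)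
  show "((\<lambda>t. V t / a) \<longlongrightarrow> 0) at_top" using tendsto_divide_zero[OF V_tendsto_zero] .
qed simp

lemma M_tendsto_zero: "(M \<longlongrightarrow> 0) at_top"
  using M_deriv \<delta>M_pos tendsto_mult_right_zero[OF E_tendsto_zero, of cM] _ M_nonneg
  by (rule linear_decay_tendsto_zero) simp

lemma x_tendsto_zero: "(x \<longlongrightarrow> 0) at_top"
proof -
  have "((\<lambda>t. (E t, M t, F t)) \<longlongrightarrow> (0, 0, 0)) at_top"
    by (intro tendsto_Pair E_tendsto_zero M_tendsto_zero F_tendsto_zero)
  moreover have "(\<lambda>t. (E t, M t, F t)) = x" by (intro ext) (rule x_eq[symmetric])
  ultimately show ?thesis by (simp add: zero_prod_def)
qed

lemma norm_le_components:
  assumes "0 \<le> t"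
  shows "norm (x t) \<le> E t + M t + F t"
proof -
  have "norm (x t) \<le> norm (E t) + norm (M t, F t)" by (subst x_eq) (rule norm_Pair_le)
  also have "norm (M t, F t) \<le> norm (M t) + norm (F t)" by (rule norm_Pair_le)
  finally show ?thesis using E_F_nonneg[OF assms] M_nonneg[OF assms] by simp
qed

lemma initial_components_le_norm: "E 0 \<le> norm (x 0)" "M 0 \<le> norm (x 0)" "F 0 \<le> norm (x 0)"
proof -
  have "norm (E 0) \<le> norm (x 0)" "norm (M 0, F 0) \<le> norm (x 0)"
    by (subst x_eq, rule norm_fst_le, subst x_eq, rule norm_snd_le)
  moreover have "norm (M 0) \<le> norm (M 0, F 0)" "norm (F 0) \<le> norm (M 0, F 0)"
    by (rule norm_fst_le, rule norm_snd_le)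
  ultimately show "E 0 \<le> norm (x 0)" "M 0 \<le> norm (x 0)" "F 0 \<le> norm (x 0)" by auto
qed

lemma norm_le_initial:
  assumes "0 \<le> t"
  shows "norm (x t) \<le> stability_const * norm (x 0)"
proof -
  define n0 where "n0 = norm (x 0)"
  define q where "q = 1 / cF + 1 / a + cM / (cF * \<delta>M)"
  have "cF * E 0 \<le> cF * n0" "a * F 0 \<le> a * n0"
    using initial_components_le_norm(1,3) cF_pos a_pos by (simp_all add: n0_def)
  then have "V 0 \<le> (cF + a) * n0" by (simp add: V_def distrib_right)
  have "norm (x t) \<le> E t + M t + F t" by (rule norm_le_components[OF assms])
  also have "\<dots> \<le> V 0 / cF + (n0 + cM * V 0 / (cF * \<delta>M)) + V 0 / a"
    using E_le_initial_V[OF assms] M_le[OF assms] F_le_initial_V[OF assms] initial_components_le_norm(2)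
    by (intro add_mono) (simp_all add: n0_def)
  also have "\<dots> = n0 + V 0 * q" by (simp add: q_def algebra_simps)
  also have "\<dots> \<le> n0 + (cF + a) * n0 * q"
    using \<open>V 0 \<le> (cF + a) * n0\<close> cF_pos a_pos cM_pos \<delta>M_pos
    by (intro add_left_mono mult_right_mono) (auto simp: q_def)
  also have "\<dots> = stability_const * n0"
    using cF_pos a_pos \<delta>M_pos by (simp add: stability_const_def q_def field_simps)
  finally show ?thesis by (simp add: n0_def)
qed

end

context mosquito_model
begin

lemma mosquito_solutionI:
  "is_solution (mosq_field \<beta>E \<nu>E \<delta>E \<delta>M \<delta>F K \<nu>) x \<Longrightarrow> x 0 \<in> nonneg_orthant
    \<Longrightarrow> mosquito_solution \<beta>E \<nu>E \<delta>E \<delta>M \<delta>F K \<nu> x"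
  by unfold_locales

lemma GAS_in_origin: "GAS_in (mosq_field \<beta>E \<nu>E \<delta>E \<delta>M \<delta>F K \<nu>) nonneg_orthant 0"
  unfolding GAS_in_def global_attractor_in_def
proof (intro conjI allI impI)
  show "stable_in (mosq_field \<beta>E \<nu>E \<delta>E \<delta>M \<delta>F K \<nu>) nonneg_orthant 0"
    using stability_const_pos mosquito_solution.norm_le_initial[OF mosquito_solutionI]
    by (rule stable_in_zero_of_linear_bound)
  fix x assume "is_solution (mosq_field \<beta>E \<nu>E \<delta>E \<delta>M \<delta>F K \<nu>) x \<and> x 0 \<in> nonneg_orthant"
  then show "(x \<longlongrightarrow> 0) at_top"
    using mosquito_solution.x_tendsto_zero[OF mosquito_solutionI] by blast
qed

end

theorem theorem1:
  fixes \<beta>E \<nu>E \<delta>E \<delta>M \<delta>F K \<nu> :: real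
  assumes "\<beta>E > 0" "\<nu>E > 0" "\<delta>E > 0" "\<delta>M > 0" "\<delta>F > 0" "K > 0"
    and "0 < \<nu>" "\<nu> < 1"
    and "R0 \<beta>E \<nu>E \<delta>E \<delta>F \<nu> \<le> 1"
  shows "GAS_in (mosq_field \<beta>E \<nu>E \<delta>E \<delta>M \<delta>F K \<nu>) nonneg_orthant (0, 0, 0)"
proof -
  interpret mosquito_model \<beta>E \<nu>E \<delta>E \<delta>M \<delta>F K \<nu>
    using assms by unfold_locales
  show ?thesis using GAS_in_origin by (simp add: zero_prod_def)
qed

end
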